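(* Let $X$ be a Banach space as described in the context, let $f\in X$ not be a polynomial, and suppose there exists a sequence $p_n\in\mathcal{P}_n[\mathbb{Z}]$ with $\lim_{n\to\infty}\|f-p_n\|=0$. Then the radius of convergence of the Taylor series of $f$ in powers of $z$ is at most $1$.
   Context: $\mathbb{D}=\{z\in\mathbb{C}:|z|<1\}$. $X$ is a complex Banach space of functions analytic in $\mathbb{D}$ whose norm $\|\cdot\|$ satisfies: (i) $\|f(\cdot\, e^{it})\|=\|f(\cdot)\|$ for all $t\in\mathbb{R}$ and $f\in X$; (ii) $\|f\|<\infty$ for every entire function $f$; (iii) for all $f\in X$ and $g\in L[0,2\pi]$, $\big\|\frac{1}{2\pi}\int_0^{2\pi} f(ze^{it})g(t)\,dt\big\|\le \frac{1}{2\pi}\int_0^{2\pi}|g(t)|\,dt\cdot\|f\|$. A complex number is called an integer if its real and imaginary parts are integers; $\mathcal{P}_n[\mathbb{Z}]$ is the set of complex polynomials of degree at most $n-1$ with integer coefficients in this sense. *)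

theory Defs
  imports "HOL-Complex_Analysis.Complex_Analysis" "HOL-Computational_Algebra.Polynomial"
begin

definition complex_integer :: "complex \<Rightarrow> bool" where
  "complex_integer z \<longleftrightarrow> Re z \<in> \<int> \<and> Im z \<in> \<int>"

definition int_polys :: "nat \<Rightarrow> complex poly set" where
  "int_polys n = {p. degree p < n \<and> (\<forall>i. complex_integer (coeff p i))}"

definition rot_conv :: "(complex \<Rightarrow> complex) \<Rightarrow> (real \<Rightarrow> complex) \<Rightarrow> complex \<Rightarrow> complex" where
  "rot_conv f g z = complex_of_real (1 / (2 * pi)) * integral {0..2*pi} (\<lambda>t. f (z * cis t) * g t)"

text \<open>X (a set of functions, identified by their values on the unit disk) with norm N
  is a complex Banach space of functions analytic in the disk satisfying (i)-(iii).\<close>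
definition admissible_space :: "(complex \<Rightarrow> complex) set \<Rightarrow> ((complex \<Rightarrow> complex) \<Rightarrow> real) \<Rightarrow> bool" where
  "admissible_space X N \<longleftrightarrow>
    \<comment> \<open>functions analytic in the disk, elements determined by their values on the disk\<close>
    (\<forall>f\<in>X. f analytic_on ball 0 1) \<and>
    (\<forall>f\<in>X. \<forall>g. (\<forall>z\<in>ball 0 1. g z = f z) \<longrightarrow> g \<in> X \<and> N g = N f) \<and>
    \<comment> \<open>complex vector space\<close>
    (\<forall>f\<in>X. \<forall>g\<in>X. (\<lambda>z. f z + g z) \<in> X) \<and>
    (\<forall>f\<in>X. \<forall>c::complex. (\<lambda>z. c * f z) \<in> X) \<and>
    \<comment> \<open>norm axioms\<close>
    (\<forall>f\<in>X. N f \<ge> 0) \<and>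
    (\<forall>f\<in>X. N f = 0 \<longleftrightarrow> (\<forall>z\<in>ball 0 1. f z = 0)) \<and>
    (\<forall>f\<in>X. \<forall>c::complex. N (\<lambda>z. c * f z) = norm c * N f) \<and>
    (\<forall>f\<in>X. \<forall>g\<in>X. N (\<lambda>z. f z + g z) \<le> N f + N g) \<and>
    \<comment> \<open>completeness\<close>
    (\<forall>u::nat \<Rightarrow> complex \<Rightarrow> complex.
       (\<forall>n. u n \<in> X) \<and> (\<forall>e>0. \<exists>M. \<forall>m\<ge>M. \<forall>n\<ge>M. N (\<lambda>z. u m z - u n z) < e)
       \<longrightarrow> (\<exists>g\<in>X. (\<lambda>n. N (\<lambda>z. u n z - g z)) \<longlonglongrightarrow> 0)) \<and>
    \<comment> \<open>(i) rotation invariance\<close>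
    (\<forall>f\<in>X. \<forall>t::real. (\<lambda>z. f (z * cis t)) \<in> X \<and> N (\<lambda>z. f (z * cis t)) = N f) \<and>
    \<comment> \<open>(ii) every entire function has finite norm, i.e. belongs to X\<close>
    (\<forall>f. f holomorphic_on UNIV \<longrightarrow> f \<in> X) \<and>
    \<comment> \<open>(iii)\<close>
    (\<forall>f\<in>X. \<forall>g::real \<Rightarrow> complex. g absolutely_integrable_on {0..2*pi} \<longrightarrow>
       rot_conv f g \<in> X \<and>
       N (rot_conv f g) \<le> (1 / (2 * pi)) * integral {0..2*pi} (\<lambda>t. norm (g t)) * N f)"

end

theory Submission imports Defs begin

text \<open>Convolving with \<open>e\<^sup>-\<^sup>i\<^sup>k\<^sup>t\<close> as in condition (iii) maps \<open>h \<in> X\<close> to its \<open>k\<close>-th Taylor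
  monomial \<open>a\<^sub>k(h) z\<^sup>k\<close>, so \<open>|a\<^sub>k(h)| \<parallel>z\<^sup>k\<parallel> \<le> \<parallel>h\<parallel>\<close>: Taylor coefficients depend continuously
  on \<open>h \<in> X\<close>. Hence the Taylor coefficients of \<open>f\<close> are limits of Gaussian integers, so Gaussian
  integers themselves. If the Taylor series converged beyond the unit circle, they would tend
  to 0, hence vanish eventually, and \<open>f\<close> would be a polynomial on the disc.\<close>

lemma higher_deriv_poly: "(deriv ^^ k) (\<lambda>w. poly p w) = (\<lambda>w. poly ((pderiv ^^ k) p) w)"
proof (induction k)
  case 0 then show ?case by simp
next
  case (Suc k)
  have "(deriv ^^ Suc k) (\<lambda>w. poly p w) = deriv (\<lambda>w. poly ((pderiv ^^ k) p) w)"
    by (simp only: funpow.simps comp_apply Suc.IH)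
  also have "\<dots> = (\<lambda>w. poly (pderiv ((pderiv ^^ k) p)) w)"
    by (rule ext, rule DERIV_imp_deriv, rule poly_DERIV)
  finally show ?case by (simp only: funpow.simps comp_apply)
qed

lemma taylor_coeff_poly: "(deriv ^^ k) (\<lambda>w. poly p w) 0 / fact k = coeff p k"
proof -
  have "(deriv ^^ k) (\<lambda>w. poly p w) 0 = coeff ((pderiv ^^ k) p) 0"
    by (simp only: higher_deriv_poly poly_0_coeff_0)
  also have "\<dots> = fact k * coeff p k"
    by (simp add: coeff_higher_pderiv pochhammer_fact)
  finally show ?thesis by simp
qed

lemma holomorphic_eq_poly_on_ball:
  assumes "f holomorphic_on ball 0 r"
    and "\<And>n. (deriv ^^ n) f 0 / fact n = coeff q n"
    and "z \<in> ball 0 r"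
  shows "f z = poly q z"
proof (rule holomorphic_fun_eq_on_ball[OF assms(1) _ assms(3)])
  show "(\<lambda>w. poly q w) holomorphic_on ball 0 r" by (intro holomorphic_intros)
  show "(deriv ^^ n) f 0 = (deriv ^^ n) (\<lambda>w. poly q w) 0" for n
    using assms(2)[of n] taylor_coeff_poly[of n q] by (simp add: field_simps)
qed

lemma has_integral_taylor_coeff_circle:
  fixes F :: "complex \<Rightarrow> complex"
  assumes holF: "F holomorphic_on ball 0 R" and R: "R > 1"
  shows "((\<lambda>t. F (cis t) * cis (- (of_nat k * t))) has_integral
           (2 * pi * ((deriv ^^ k) F 0 / fact k))) {0..2*pi}"
proof -
  have "continuous_on (cball 0 1) F"
    by (rule continuous_on_subset[OF holomorphic_on_imp_continuous_on[OF holF]])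
       (use R in \<open>simp add: cball_subset_ball_iff\<close>)
  moreover have "F holomorphic_on ball 0 1"
    by (rule holomorphic_on_subset[OF holF]) (use R in \<open>simp add: subset_ball\<close>)
  ultimately have "((\<lambda>u. F u / (u - 0) ^ Suc k) has_contour_integral
      ((2 * pi * \<i>) / fact k * (deriv ^^ k) F 0)) (circlepath 0 1)"
    by (rule Cauchy_has_contour_integral_higher_derivative_circlepath) simp
  then have I: "((\<lambda>x. F (circlepath 0 1 x) / (circlepath 0 1 x) ^ Suc k
        * vector_derivative (circlepath 0 1) (at x within {0..1}))
      has_integral ((2 * pi * \<i>) / fact k * (deriv ^^ k) F 0)) {0..1}"
    by (simp add: has_contour_integral_def)
  have I2: "((\<lambda>x. (2 * pi * \<i>) * (F (cis (2*pi*x)) * cis (- (of_nat k * (2*pi*x)))))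
      has_integral ((2 * pi * \<i>) / fact k * (deriv ^^ k) F 0)) {0..1}"
  proof (rule has_integral_eq[OF _ I])
    fix x :: real assume x: "x \<in> {0..1}"
    have e: "exp (2 * of_real pi * \<i> * of_real x) = cis (2*pi*x)"
      by (simp add: cis_conv_exp mult_ac)
    have cp: "circlepath 0 1 x = cis (2*pi*x)" by (simp add: circlepath e)
    have vd: "vector_derivative (circlepath 0 1) (at x within {0..1}) = 2 * pi * \<i> * cis (2*pi*x)"
      using x by (simp add: vector_derivative_circlepath01 e)
    have inv: "cis (- (of_nat k * (2*pi*x))) = inverse (cis (2*pi*x) ^ k)"
      using Complex.DeMoivre[of "2*pi*x" k] by simp
    show "F (circlepath 0 1 x) / (circlepath 0 1 x) ^ Suc k
          * vector_derivative (circlepath 0 1) (at x within {0..1})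
        = (2 * pi * \<i>) * (F (cis (2*pi*x)) * cis (- (of_nat k * (2*pi*x))))"
      unfolding cp vd inv by (simp add: field_simps)
  qed
  have "((\<lambda>x. F (cis (2*pi*x)) * cis (- (of_nat k * (2*pi*x))))
      has_integral ((deriv ^^ k) F 0 / fact k)) {0..1}"
    using has_integral_mult_right[OF I2, of "inverse (2 * pi * \<i>)"] by (simp add: field_simps)
  from has_integral_stretch_real[OF this, of "1/(2*pi)"]
  have "((\<lambda>x. F (cis x) * cis (- (of_nat k * x))) has_integral
      (2 * pi) *\<^sub>R ((deriv ^^ k) F 0 / fact k)) ((\<lambda>x. x / (1/(2*pi))) ` {0..1})"
    by (simp add: mult_ac)
  moreover have "(\<lambda>x. x / (1/(2*pi))) ` {0..1} = {0..2*pi}"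
    by (subst image_divide_atLeastAtMost) auto
  ultimately show ?thesis by (simp add: scaleR_conv_of_real)
qed

lemma rot_conv_cis_eq_taylor_monomial:
  assumes holh: "h holomorphic_on ball 0 1" and z: "z \<in> ball 0 1"
  shows "rot_conv h (\<lambda>t. cis (- (of_nat k * t))) z = (deriv ^^ k) h 0 / fact k * z ^ k"
proof -
  define R where "R = (if z = 0 then 2 else 1 / norm z)"
  have R: "R > 1" using z by (auto simp: R_def field_simps)
  have scale_into_disc: "z * w \<in> ball 0 1" if "w \<in> ball 0 R" for w
  proof (cases "z = 0")
    case False
    then have "norm z * norm w < 1" using that by (simp add: R_def field_simps)
    then show ?thesis by (simp add: norm_mult)
  qed simp
  have "(h \<circ> (\<lambda>w. z * w)) holomorphic_on ball 0 R"
    by (rule holomorphic_on_compose)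
       (auto intro!: holomorphic_intros holomorphic_on_subset[OF holh] scale_into_disc)
  then have "(\<lambda>w. h (z * w)) holomorphic_on ball 0 R" by (simp add: o_def)
  moreover have "(deriv ^^ k) (\<lambda>w. h (z * w)) 0 = z ^ k * (deriv ^^ k) h 0"
    using higher_deriv_compose_linear[OF holh, of "ball 0 R" 0 z k] scale_into_disc R by simp
  ultimately have "integral {0..2*pi} (\<lambda>t. h (z * cis t) * cis (- (of_nat k * t))) =
      2 * pi * (z ^ k * (deriv ^^ k) h 0 / fact k)"
    using has_integral_taylor_coeff_circle[OF _ R, of "\<lambda>w. h (z * w)" k]
    by (auto intro: integral_unique)
  then show ?thesis by (simp add: rot_conv_def field_simps)
qed

lemma complex_integer_norm_less_1_imp_zero:
  assumes "complex_integer c" "norm c < 1" shows "c = 0"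
proof -
  obtain a b where ab: "Re c = of_int a" "Im c = of_int b"
    using assms(1) by (auto simp: complex_integer_def elim!: Ints_cases)
  have "\<bar>Re c\<bar> < 1" "\<bar>Im c\<bar> < 1"
    using assms(2) abs_Re_le_cmod abs_Im_le_cmod order.strict_trans1 by blast+
  then have "a = 0" "b = 0" unfolding ab by linarith+
  then show ?thesis using ab by (simp add: complex_eq_iff)
qed

lemma complex_integer_tendsto:
  assumes "s \<longlonglongrightarrow> c" "eventually (\<lambda>n. complex_integer (s n)) sequentially"
  shows "complex_integer c"
proof -
  have "Re c \<in> \<int>"
    by (rule Lim_in_closed_set[OF closed_Ints _ _ tendsto_Re[OF assms(1)]])
       (use assms(2) in \<open>auto simp: complex_integer_def elim: eventually_mono\<close>)
  moreover have "Im c \<in> \<int>"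
    by (rule Lim_in_closed_set[OF closed_Ints _ _ tendsto_Im[OF assms(1)]])
       (use assms(2) in \<open>auto simp: complex_integer_def elim: eventually_mono\<close>)
  ultimately show ?thesis by (simp add: complex_integer_def)
qed

lemma complex_integer_coeffs_conv_radius_gt_1_imp_poly:
  assumes ints: "\<And>n. complex_integer (a n)" and radius: "conv_radius a > 1"
  obtains q where "\<And>n. coeff q n = a n"
proof -
  have "summable (\<lambda>n. a n * 1 ^ n)"
    by (rule summable_in_conv_radius) (use radius in \<open>simp add: one_ereal_def\<close>)
  then have "(\<lambda>n. norm (a n)) \<longlonglongrightarrow> 0"
    using summable_LIMSEQ_zero tendsto_norm_zero by fastforce
  then have "eventually (\<lambda>n. norm (a n) < 1) sequentially"
    by (rule order_tendstoD(2)) simp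
  then obtain M where "\<And>n. n \<ge> M \<Longrightarrow> norm (a n) < 1"
    unfolding eventually_sequentially by blast
  then have vanish: "a n = 0" if "n \<ge> M" for n
    using complex_integer_norm_less_1_imp_zero ints that by blast
  show ?thesis
    by (rule that[of "\<Sum>j<M. monom (a j) j"]) (use vanish in \<open>auto simp: coeff_sum\<close>)
qed

context
  fixes X :: "(complex \<Rightarrow> complex) set" and N :: "(complex \<Rightarrow> complex) \<Rightarrow> real"
  assumes adm: "admissible_space X N"
begin

lemma admissible_space_holomorphic: "f \<in> X \<Longrightarrow> f holomorphic_on ball 0 1"
  using adm analytic_imp_holomorphic unfolding admissible_space_def by meson

lemma admissible_space_cong:
  "f \<in> X \<Longrightarrow> (\<And>z. z \<in> ball 0 1 \<Longrightarrow> g z = f z) \<Longrightarrow> g \<in> X \<and> N g = N f"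
  using adm unfolding admissible_space_def by meson

lemma admissible_space_add: "f \<in> X \<Longrightarrow> g \<in> X \<Longrightarrow> (\<lambda>z. f z + g z) \<in> X"
  using adm unfolding admissible_space_def by meson

lemma admissible_space_scale: "f \<in> X \<Longrightarrow> (\<lambda>z. c * f z) \<in> X"
  using adm unfolding admissible_space_def by meson

lemma admissible_space_norm_nonneg: "f \<in> X \<Longrightarrow> N f \<ge> 0"
  using adm unfolding admissible_space_def by meson

lemma admissible_space_norm_eq_0_iff: "f \<in> X \<Longrightarrow> N f = 0 \<longleftrightarrow> (\<forall>z\<in>ball 0 1. f z = 0)"
  using adm unfolding admissible_space_def by meson

lemma admissible_space_norm_scale: "f \<in> X \<Longrightarrow> N (\<lambda>z. c * f z) = norm c * N f"
  using adm unfolding admissible_space_def by meson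

lemma admissible_space_entire: "f holomorphic_on UNIV \<Longrightarrow> f \<in> X"
  using adm unfolding admissible_space_def by meson

lemma admissible_space_rot_conv:
  assumes "f \<in> X" "g absolutely_integrable_on {0..2*pi}"
  shows "rot_conv f g \<in> X"
    and "N (rot_conv f g) \<le> (1 / (2 * pi)) * integral {0..2*pi} (\<lambda>t. norm (g t)) * N f"
  using adm assms unfolding admissible_space_def by (meson conjunct1 conjunct2)+

lemma admissible_space_diff:
  assumes "f \<in> X" "g \<in> X" shows "(\<lambda>z. f z - g z) \<in> X"
  using admissible_space_cong[OF admissible_space_add[OF assms(1) admissible_space_scale[OF assms(2), of "-1"]]]
  by simp

lemma admissible_space_poly: "(\<lambda>z. poly q z) \<in> X"
  by (rule admissible_space_entire) (intro holomorphic_intros)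

lemma admissible_space_norm_monomial_pos: "N (\<lambda>z. z ^ k) > 0"
proof -
  have mono: "(\<lambda>z::complex. z ^ k) \<in> X"
    by (rule admissible_space_entire) (intro holomorphic_intros)
  have "N (\<lambda>z. z ^ k) \<noteq> 0"
  proof
    assume "N (\<lambda>z. z ^ k) = 0"
    then have "\<forall>z\<in>ball 0 1. z ^ k = (0::complex)"
      using admissible_space_norm_eq_0_iff[OF mono] by blast
    from bspec[OF this, of "1/2"] show False by simp
  qed
  then show ?thesis
    using admissible_space_norm_nonneg[OF mono] by simp
qed

lemma admissible_space_norm_taylor_coeff_le:
  assumes h: "h \<in> X"
  shows "norm ((deriv ^^ k) h 0 / fact k) * N (\<lambda>z. z ^ k) \<le> N h"
proof -
  define c where "c = (deriv ^^ k) h 0 / fact k"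
  define g where "g = (\<lambda>t::real. cis (- (of_nat k * t)))"
  have g: "g absolutely_integrable_on {0..2*pi}"
    unfolding g_def by (rule absolutely_integrable_continuous_real, intro continuous_intros)
  have "integral {0..2*pi} (\<lambda>t. norm (g t)) = 2 * pi" by (simp add: g_def)
  then have "N (rot_conv h g) \<le> N h"
    using admissible_space_rot_conv(2)[OF h g] by simp
  moreover have "N (\<lambda>z. c * z ^ k) = N (rot_conv h g)"
  proof (rule admissible_space_cong[OF admissible_space_rot_conv(1)[OF h g], THEN conjunct2])
    show "c * z ^ k = rot_conv h g z" if "z \<in> ball 0 1" for z
      unfolding c_def g_def
      by (rule rot_conv_cis_eq_taylor_monomial[OF admissible_space_holomorphic[OF h] that, symmetric])
  qed
  moreover have "N (\<lambda>z. c * z ^ k) = norm c * N (\<lambda>z. z ^ k)"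
    by (rule admissible_space_norm_scale, rule admissible_space_entire) (intro holomorphic_intros)
  ultimately show ?thesis unfolding c_def by linarith
qed

lemma admissible_space_taylor_coeff_tendsto:
  assumes f: "f \<in> X" and g: "\<And>n. g n \<in> X"
    and lim: "(\<lambda>n. N (\<lambda>z. f z - g n z)) \<longlonglongrightarrow> 0"
  shows "(\<lambda>n. (deriv ^^ k) (g n) 0 / fact k) \<longlonglongrightarrow> (deriv ^^ k) f 0 / fact k"
proof -
  have bound: "norm ((deriv ^^ k) f 0 / fact k - (deriv ^^ k) (g n) 0 / fact k)
      \<le> N (\<lambda>z. f z - g n z) / N (\<lambda>z. z ^ k)" for n
  proof -
    have "(deriv ^^ k) (\<lambda>z. f z - g n z) 0 = (deriv ^^ k) f 0 - (deriv ^^ k) (g n) 0"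
      by (rule higher_deriv_diff) (use f g admissible_space_holomorphic in auto)
    then have "norm ((deriv ^^ k) f 0 / fact k - (deriv ^^ k) (g n) 0 / fact k) * N (\<lambda>z. z ^ k)
        \<le> N (\<lambda>z. f z - g n z)"
      using admissible_space_norm_taylor_coeff_le[OF admissible_space_diff[OF f g[of n]], of k]
      by (simp add: diff_divide_distrib)
    then show ?thesis
      using admissible_space_norm_monomial_pos[of k] by (simp add: pos_le_divide_eq)
  qed
  have "(\<lambda>n. (deriv ^^ k) f 0 / fact k - (deriv ^^ k) (g n) 0 / fact k) \<longlonglongrightarrow> 0"
    by (rule Lim_null_comparison[OF always_eventually[OF allI[OF bound]]])
       (use tendsto_divide_zero[OF lim] in simp)
  then have "(\<lambda>n. (deriv ^^ k) f 0 / fact k - ((deriv ^^ k) f 0 / fact k - (deriv ^^ k) (g n) 0 / fact k))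
      \<longlonglongrightarrow> (deriv ^^ k) f 0 / fact k - 0"
    by (intro tendsto_diff tendsto_const)
  then show ?thesis by simp
qed

end

theorem corollary5p1:
  fixes X :: "(complex \<Rightarrow> complex) set" and N :: "(complex \<Rightarrow> complex) \<Rightarrow> real"
    and f :: "complex \<Rightarrow> complex" and p :: "nat \<Rightarrow> complex poly"
  assumes "admissible_space X N"
    and "f \<in> X"
    and "\<not> (\<exists>q :: complex poly. \<forall>z\<in>ball 0 1. f z = poly q z)"
    and "\<forall>n\<ge>1. p n \<in> int_polys n"
    and "(\<lambda>n. N (\<lambda>z. f z - poly (p n) z)) \<longlonglongrightarrow> 0"
  shows "conv_radius (\<lambda>n. (deriv ^^ n) f 0 / fact n) \<le> 1"
proof (rule ccontr)
  assume "\<not> ?thesis"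
  then have radius: "conv_radius (\<lambda>k. (deriv ^^ k) f 0 / fact k) > 1" by simp
  have "(\<lambda>n. coeff (p n) k) \<longlonglongrightarrow> (deriv ^^ k) f 0 / fact k" for k
    using admissible_space_taylor_coeff_tendsto[OF assms(1,2) admissible_space_poly[OF assms(1)] assms(5)]
    by (simp add: taylor_coeff_poly)
  moreover have "eventually (\<lambda>n. complex_integer (coeff (p n) k)) sequentially" for k
    using assms(4) by (auto simp: int_polys_def eventually_sequentially)
  ultimately have "complex_integer ((deriv ^^ k) f 0 / fact k)" for k
    by (rule complex_integer_tendsto)
  then obtain q where "\<And>k. coeff q k = (deriv ^^ k) f 0 / fact k"
    by (rule complex_integer_coeffs_conv_radius_gt_1_imp_poly[OF _ radius]) blast
  then have "\<forall>z\<in>ball 0 1. f z = poly q z"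
    using holomorphic_eq_poly_on_ball[OF admissible_space_holomorphic[OF assms(1,2)]] by simp
  with assms(3) show False by blast
qed

end
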